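(* Let $\varphi_1$ and $\varphi_2$ be two $\mathbb{T}$-gains on a connected graph $G$ with $n$ vertices and $m$ edges. Let $T$ be a normal spanning tree of $G$ and let $\overrightarrow{C_j(T)}$, $j=1,\dots,m-n+1$, be the directed fundamental cycles in the suitably oriented graph $\overrightarrow{G_T}$. Then $\varphi_1(\overrightarrow{C_j(T)})=\varphi_2(\overrightarrow{C_j(T)})$ for all $j=1,\dots,m-n+1$ if and only if $\varphi_1(\overrightarrow{C})=\varphi_2(\overrightarrow{C})$ for every cycle $C$ of $G$ (with $\overrightarrow{C}$ a directed version of $C$).
   Context: Graphs are finite, simple and undirected. $\mathbb{T}=\{z\in\mathbb{C}:|z|=1\}$. Each edge $e_{st}$ of $G$ gives two oriented edges $\overrightarrow{e_{st}}$ and $\overrightarrow{e_{ts}}$. A $\mathbb{T}$-gain on $G$ is a map $\varphi$ from the set of oriented edges to $\mathbb{T}$ with $\varphi(\overrightarrow{e_{ts}})=\varphi(\overrightarrow{e_{st}})^{-1}$; $\Phi=(G,\varphi)$ is then a $\mathbb{T}$-gain graph. The gain of a directed cycle $v_1\to v_2\to\cdots\to v_k\to v_1$ is $\varphi(\overrightarrow{e_{12}})\varphi(\overrightarrow{e_{23}})\cdots\varphi(\overrightarrow{e_{k1}})$; the two directions of a cycle have conjugate gains. A rooted spanning tree $T$ with root $v_r$ induces the tree order: $v_x\le v_y$ iff $v_x$ lies on the path in $T$ from $v_r$ to $v_y$. $T$ is a normal spanning tree if any two adjacent vertices of $G$ are comparable in the tree order. The suitably oriented graph $\overrightarrow{G_T}$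 orients each edge $e_{st}$ with $v_s\le v_t$ as $\overrightarrow{e_{st}}$ if $e_{st}\in E(T)$ and as $\overrightarrow{e_{ts}}$ if $e_{st}\notin E(T)$. Each of the $m-n+1$ edges not in $T$ creates a unique cycle with $T$ (a fundamental cycle $C_j(T)$); in $\overrightarrow{G_T}$ each fundamental cycle is a directed cycle, denoted $\overrightarrow{C_j(T)}$ (the directed fundamental cycles). *)

theory Defs
  imports Complex_Main
begin

text \<open>A finite simple graph: vertex set V, edge set E given as a symmetric,
irreflexive relation on V (each undirected edge e_st appears as (s,t) and (t,s),
which are at the same time its two orientations).\<close>
definition simple_graph :: "'a set \<Rightarrow> ('a \<times> 'a) set \<Rightarrow> bool" where
  "simple_graph V E \<longleftrightarrow> finite V \<and> E \<subseteq> V \<times> V \<and> sym E \<and> irrefl E"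

definition is_path :: "('a \<times> 'a) set \<Rightarrow> 'a list \<Rightarrow> bool" where
  "is_path E p \<longleftrightarrow> p \<noteq> [] \<and> distinct p \<and> (\<forall>i. Suc i < length p \<longrightarrow> (p ! i, p ! Suc i) \<in> E)"

definition path_from_to :: "('a \<times> 'a) set \<Rightarrow> 'a \<Rightarrow> 'a \<Rightarrow> 'a list \<Rightarrow> bool" where
  "path_from_to E x y p \<longleftrightarrow> is_path E p \<and> hd p = x \<and> last p = y"

definition connected_graph :: "'a set \<Rightarrow> ('a \<times> 'a) set \<Rightarrow> bool" where
  "connected_graph V E \<longleftrightarrow> V \<noteq> {} \<and> (\<forall>x\<in>V. \<forall>y\<in>V. \<exists>p. path_from_to E x y p)"

text \<open>A directed cycle v_1 -> v_2 -> ... -> v_k -> v_1 (k >= 3, distinct vertices).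
The same list read in the two directions gives the two directed versions of the cycle.\<close>
definition is_cycle :: "('a \<times> 'a) set \<Rightarrow> 'a list \<Rightarrow> bool" where
  "is_cycle E c \<longleftrightarrow> length c \<ge> 3 \<and> distinct c \<and>
     (\<forall>i < length c. (c ! i, c ! ((Suc i) mod length c)) \<in> E)"

definition T_gain :: "('a \<times> 'a) set \<Rightarrow> ('a \<Rightarrow> 'a \<Rightarrow> complex) \<Rightarrow> bool" where
  "T_gain E \<phi> \<longleftrightarrow> (\<forall>(u,v)\<in>E. cmod (\<phi> u v) = 1 \<and> \<phi> v u = inverse (\<phi> u v))"

definition cycle_gain :: "('a \<Rightarrow> 'a \<Rightarrow> complex) \<Rightarrow> 'a list \<Rightarrow> complex" where
  "cycle_gain \<phi> c = (\<Prod>i<length c. \<phi> (c ! i) (c ! ((Suc i) mod length c)))"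

definition spanning_tree :: "'a set \<Rightarrow> ('a \<times> 'a) set \<Rightarrow> ('a \<times> 'a) set \<Rightarrow> bool" where
  "spanning_tree V E T \<longleftrightarrow> T \<subseteq> E \<and> sym T \<and> connected_graph V T \<and> (\<nexists>c. is_cycle T c)"

definition tree_path :: "('a \<times> 'a) set \<Rightarrow> 'a \<Rightarrow> 'a \<Rightarrow> 'a list" where
  "tree_path T x y = (THE p. path_from_to T x y p)"

definition tree_le :: "('a \<times> 'a) set \<Rightarrow> 'a \<Rightarrow> 'a \<Rightarrow> 'a \<Rightarrow> bool" where
  "tree_le T r x y \<longleftrightarrow> x \<in> set (tree_path T r y)"

definition normal_spanning_tree :: "'a set \<Rightarrow> ('a \<times> 'a) set \<Rightarrow> ('a \<times> 'a) set \<Rightarrow> 'a \<Rightarrow> bool" where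
  "normal_spanning_tree V E T r \<longleftrightarrow> spanning_tree V E T \<and> r \<in> V \<and>
     (\<forall>(x,y)\<in>E. tree_le T r x y \<or> tree_le T r y x)"

text \<open>Directed fundamental cycles in the suitably oriented graph G_T: for a non-tree
edge e_st with v_s \<le> v_t, tree edges are oriented away from the root and the non-tree edge
as t -> s, so the directed fundamental cycle is s -> (tree path) -> t -> s, i.e. the
closed walk given by the list tree_path T s t.\<close>
definition directed_fundamental_cycles ::
  "('a \<times> 'a) set \<Rightarrow> ('a \<times> 'a) set \<Rightarrow> 'a \<Rightarrow> 'a list set" where
  "directed_fundamental_cycles E T r =
     {tree_path T s t | s t. (s, t) \<in> E - T \<and> tree_le T r s t}"

end

theory Submission
  imports Defs
begin

text \<open>Two gains agree on a cycle iff their ratio \<open>\<psi> = \<phi>1 / \<phi>2\<close>, again a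
\<open>\<bbbT>\<close>-gain, has gain 1 on it. Suppose \<open>\<psi>\<close> has gain 1 on every directed fundamental
cycle and let \<open>f v\<close> be the \<open>\<psi>\<close>-gain of the tree path from the root to \<open>v\<close>. Since the
tree is normal, the ends of every edge are comparable, say \<open>s \<le> t\<close>, so the tree path to
\<open>t\<close> passes through \<open>s\<close> and \<open>f t = f s \<cdot> \<psi>(s, t)\<close>: trivially for a tree edge, and for
a non-tree edge because its fundamental cycle has gain 1. Thus \<open>\<psi>(u, v) = f v / f u\<close>
on all edges and the gain of every cycle telescopes to 1. The converse holds because
fundamental cycles are cycles.\<close>

lemma is_path_iff_successively:
  "is_path E p \<longleftrightarrow> p \<noteq> [] \<and> distinct p \<and> successively (\<lambda>x y. (x, y) \<in> E) p"
  unfolding is_path_def successively_conv_nth by blast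

lemma is_path_append_iff:
  assumes "p \<noteq> []" "q \<noteq> []"
  shows "is_path E (p @ q) \<longleftrightarrow>
    is_path E p \<and> is_path E q \<and> set p \<inter> set q = {} \<and> (last p, hd q) \<in> E"
  using assms by (auto simp: is_path_iff_successively successively_append_iff)

lemma is_path_take:
  assumes "is_path E p" "n > 0"
  shows "is_path E (take n p)"
proof (cases "n < length p")
  case True
  then show ?thesis
    using assms is_path_append_iff[of "take n p" "drop n p" E] by (simp add: is_path_def)
qed (use assms in simp)

lemma is_path_rev: "sym E \<Longrightarrow> is_path E p \<Longrightarrow> is_path E (rev p)"
  by (auto simp: is_path_iff_successively elim!: successively_mono dest: symD)

lemma path_from_to_self: "path_from_to E x x p \<Longrightarrow> p = [x]"
  by (cases p) (auto simp: path_from_to_def is_path_def split: if_splits dest: last_in_set)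

lemma path_from_to_tl:
  "path_from_to E x y (x # p) \<Longrightarrow> p \<noteq> [] \<Longrightarrow> path_from_to E (hd p) y p"
  by (auto simp: path_from_to_def is_path_iff_successively successively_Cons)

lemma is_cycle_iff_closed_path:
  "is_cycle E c \<longleftrightarrow> is_path E c \<and> length c \<ge> 3 \<and> (last c, hd c) \<in> E"
proof (cases "c = []")
  case False
  then obtain n where n: "length c = Suc n" by (cases c) auto
  have "(\<forall>i<Suc n. (c ! i, c ! (Suc i mod Suc n)) \<in> E) \<longleftrightarrow>
      (\<forall>i<n. (c ! i, c ! (Suc i mod Suc n)) \<in> E) \<and> (c ! n, c ! 0) \<in> E"
    by (auto simp: less_Suc_eq)
  also have "(\<forall>i<n. (c ! i, c ! (Suc i mod Suc n)) \<in> E) \<longleftrightarrow> (\<forall>i<n. (c ! i, c ! Suc i) \<in> E)"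
    by simp
  finally show ?thesis
    unfolding is_cycle_def is_path_def using False n by (auto simp: last_conv_nth hd_conv_nth)
qed (simp add: is_cycle_def)

lemma last_take_Suc: "i < length xs \<Longrightarrow> last (take (Suc i) xs) = xs ! i"
  by (simp add: take_Suc_conv_app_nth)

lemma first_meeting_prefixes:
  assumes "set p \<inter> set q \<noteq> {}"
  obtains i j where "i < length p" "j < length q" "p ! i = q ! j"
    "set (take (Suc i) p) \<inter> set (take (Suc j) q) = {q ! j}"
proof -
  have ex: "\<exists>j. j < length q \<and> q ! j \<in> set p"
    using assms by (metis disjoint_iff in_set_conv_nth)
  define j where "j = (LEAST j. j < length q \<and> q ! j \<in> set p)"
  have j: "j < length q" "q ! j \<in> set p"
    using LeastI_ex[OF ex] by (auto simp: j_def)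
  have before_j: "q ! k \<notin> set p" if "k < j" for k
    using not_less_Least[of k "\<lambda>j. j < length q \<and> q ! j \<in> set p"] that j(1)
    by (auto simp: j_def)
  obtain i where i: "i < length p" "p ! i = q ! j"
    using j(2) by (auto simp: in_set_conv_nth)
  have "set (take (Suc j) q) \<inter> set p \<subseteq> {q ! j}"
  proof
    fix x assume x: "x \<in> set (take (Suc j) q) \<inter> set p"
    then obtain k where "k \<le> j" "x = q ! k"
      by (metis IntD1 in_set_conv_nth length_take less_Suc_eq_le min_less_iff_conj nth_take)
    then show "x \<in> {q ! j}" using before_j x by (cases "k = j") auto
  qed
  moreover have "q ! j \<in> set (take (Suc i) p)" "q ! j \<in> set (take (Suc j) q)"
    using i j(1) by (simp_all add: take_Suc_conv_app_nth)
  moreover have "set (take (Suc i) p) \<subseteq> set p" by (rule set_take_subset)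
  ultimately show ?thesis using that[OF i(1) j(1) i(2)] by blast
qed

lemma is_cycle_of_meeting_paths:
  assumes "sym T" and xA: "is_path T (x # A)" and xB: "is_path T (x # B)"
    and meet: "set A \<inter> set B = {last B}" "last A = last B" and "hd A \<noteq> hd B"
  shows "is_cycle T (x # A @ rev (butlast B))"
proof -
  have "A \<noteq> []" "B \<noteq> []" using meet(1) by auto
  have B: "is_path T B" and xB': "(x, hd B) \<in> T" "x \<notin> set B"
    using xB is_path_append_iff[of "[x]" B T] \<open>B \<noteq> []\<close> by auto
  have "distinct (butlast B @ [last B])" using B \<open>B \<noteq> []\<close> by (simp add: is_path_def)
  then have "last B \<notin> set (butlast B)" by simp
  let ?c = "x # A @ rev (butlast B)"
  have c: "is_path T ?c \<and> length ?c \<ge> 3 \<and> last ?c = hd B"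
  proof (cases "butlast B = []")
    case True
    then have "B = [last B]" using \<open>B \<noteq> []\<close> by (metis append_butlast_last_id append_Nil)
    then have "hd B = last B" by (metis list.sel(1))
    then have "length A \<noteq> 1" using meet(2) \<open>hd A \<noteq> hd B\<close> by (cases A) auto
    moreover have "length A > 0" using \<open>A \<noteq> []\<close> by simp
    ultimately have "length A \<ge> 2" by linarith
    then show ?thesis using True xA \<open>A \<noteq> []\<close> \<open>hd B = last B\<close> meet(2) by simp
  next
    case False
    have "is_path T (butlast B @ [last B])" using B \<open>B \<noteq> []\<close> by simp
    then have "is_path T (butlast B)" "(last (butlast B), last B) \<in> T"
      using is_path_append_iff[of "butlast B" "[last B]" T] False by simp_all
    then have rev_path: "is_path T (rev (butlast B))"
      and junction: "(last A, hd (rev (butlast B))) \<in> T"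
      using \<open>sym T\<close> meet(2) by (simp_all add: is_path_rev hd_rev symD)
    have "set (butlast B) \<subseteq> set B - {last B}"
      using \<open>last B \<notin> set (butlast B)\<close> in_set_butlastD by fast
    then have "set (x # A) \<inter> set (rev (butlast B)) = {}"
      using meet(1) xB'(2) by auto
    then have "is_path T ((x # A) @ rev (butlast B))"
      using is_path_append_iff[of "x # A" "rev (butlast B)" T] xA rev_path junction False \<open>A \<noteq> []\<close>
      by simp
    moreover have "hd (butlast B) = hd B"
      using False by (cases B) (auto split: if_splits)
    moreover have "length A > 0" "length (butlast B) > 0"
      using \<open>A \<noteq> []\<close> False by (simp, metis length_greater_0_conv)
    ultimately show ?thesis using False by (simp add: last_rev del: length_greater_0_conv)
  qed
  moreover have "(last ?c, hd ?c) \<in> T" using c symD[OF \<open>sym T\<close> xB'(1)] by simp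
  ultimately show ?thesis using c by (simp add: is_cycle_iff_closed_path)
qed

lemma exists_cycle_if_paths_diverge:
  assumes "sym T" and xp: "is_path T (x # p)" and xq: "is_path T (x # q)"
    and "p \<noteq> []" "q \<noteq> []" "last p = last q" "hd p \<noteq> hd q"
  shows "\<exists>c. is_cycle T c"
proof -
  have "set p \<inter> set q \<noteq> {}"
    using assms(4-6) by (metis IntI empty_iff last_in_set)
  then obtain i j where ij: "i < length p" "j < length q" "p ! i = q ! j"
    and meet: "set (take (Suc i) p) \<inter> set (take (Suc j) q) = {q ! j}"
    by (rule first_meeting_prefixes)
  define A where "A = take (Suc i) p"
  define B where "B = take (Suc j) q"
  have "is_path T (x # A)" "is_path T (x # B)"
    using is_path_take[OF xp, of "Suc (Suc i)"] is_path_take[OF xq, of "Suc (Suc j)"]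
    by (simp_all add: A_def B_def)
  moreover have "last A = last B" "set A \<inter> set B = {last B}" "hd A \<noteq> hd B"
    using ij meet assms(7) by (simp_all add: A_def B_def last_take_Suc)
  ultimately have "is_cycle T (x # A @ rev (butlast B))"
    using \<open>sym T\<close> by (intro is_cycle_of_meeting_paths)
  then show ?thesis ..
qed

lemma acyclic_path_unique:
  assumes "sym T" "\<nexists>c. is_cycle T c"
  shows "path_from_to T x y p \<Longrightarrow> path_from_to T x y q \<Longrightarrow> p = q"
proof (induction p arbitrary: x q)
  case Nil
  then show ?case by (simp add: path_from_to_def is_path_def)
next
  case (Cons x' p)
  have "x' = x" using Cons.prems(1) by (simp add: path_from_to_def)
  obtain q' where q: "q = x # q'"
    using Cons.prems(2) by (cases q) (auto simp: path_from_to_def is_path_def)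
  show ?case
  proof (cases "p = [] \<or> q' = []")
    case True
    then have "y = x" using Cons.prems q \<open>x' = x\<close> by (auto simp: path_from_to_def)
    then have loops: "path_from_to T x x (x # p)" "path_from_to T x x q"
      using Cons.prems \<open>x' = x\<close> by simp_all
    show ?thesis
      using path_from_to_self[OF loops(1)] path_from_to_self[OF loops(2)] \<open>x' = x\<close> by simp
  next
    case False
    then have p: "path_from_to T (hd p) y p" and q': "path_from_to T (hd q') y q'"
      using Cons.prems q \<open>x' = x\<close> by (auto intro: path_from_to_tl)
    have "is_path T (x # p)" "is_path T (x # q')"
      using Cons.prems q \<open>x' = x\<close> by (simp_all add: path_from_to_def)
    moreover have "last p = last q'" using p q' by (simp add: path_from_to_def)
    ultimately have "hd p = hd q'"
      using exists_cycle_if_paths_diverge[OF \<open>sym T\<close>] False assms(2) by blast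
    then show ?thesis using Cons.IH[OF p] q' q \<open>x' = x\<close> by simp
  qed
qed

lemma tree_path_eqI:
  assumes "sym T" "\<nexists>c. is_cycle T c" "path_from_to T x y p"
  shows "tree_path T x y = p"
  unfolding tree_path_def using acyclic_path_unique[OF assms(1,2)] assms(3)
  by (blast intro: the_equality)

lemma tree_path_from_to:
  assumes "spanning_tree V E T" "x \<in> V" "y \<in> V"
  shows "path_from_to T x y (tree_path T x y)"
proof -
  obtain p where "path_from_to T x y p"
    using assms unfolding spanning_tree_def connected_graph_def by blast
  moreover have "tree_path T x y = p"
    using assms(1) calculation by (intro tree_path_eqI) (auto simp: spanning_tree_def)
  ultimately show ?thesis by simp
qed

lemma tree_path_tree_edge:
  assumes "spanning_tree V E T" "(s, t) \<in> T" "s \<noteq> t"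
  shows "tree_path T s t = [s, t]"
  using assms by (intro tree_path_eqI)
    (auto simp: spanning_tree_def path_from_to_def is_path_def nth_Cons split: nat.splits)

lemma tree_path_through:
  assumes "spanning_tree V E T" "r \<in> V" "t \<in> V" "s \<in> set (tree_path T r t)"
  obtains a b where "tree_path T r t = a @ s # b"
    "tree_path T r s = a @ [s]" "tree_path T s t = s # b"
proof -
  obtain a b where ab: "tree_path T r t = a @ s # b"
    using assms(4) by (meson split_list)
  have "path_from_to T r t (a @ s # b)"
    using tree_path_from_to[OF assms(1-3)] ab by simp
  then have rs: "path_from_to T r s (a @ [s])" and st: "path_from_to T s t (s # b)"
    by (auto simp: path_from_to_def is_path_iff_successively successively_append_iff hd_append)
  have "sym T" "\<nexists>c. is_cycle T c" using assms(1) by (simp_all add: spanning_tree_def)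
  then show ?thesis using that[OF ab tree_path_eqI[OF _ _ rs] tree_path_eqI[OF _ _ st]] by simp
qed

lemma is_cycle_tree_path_non_tree_edge:
  assumes "simple_graph V E" "spanning_tree V E T" "(s, t) \<in> E" "(s, t) \<notin> T"
  shows "is_cycle E (tree_path T s t)"
proof -
  let ?p = "tree_path T s t"
  have "s \<in> V" "t \<in> V" "s \<noteq> t"
    using assms(1,3) by (auto simp: simple_graph_def irrefl_def)
  then have p: "is_path T ?p" "hd ?p = s" "last ?p = t"
    using tree_path_from_to[OF assms(2)] by (auto simp: path_from_to_def)
  have "length ?p \<ge> 3"
  proof (rule ccontr)
    assume "\<not> length ?p \<ge> 3"
    then consider "length ?p = 0" | "length ?p = 1" | "length ?p = 2" by linarith
    then show False
    proof cases
      case 1 then show ?thesis using p by (simp add: is_path_def)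
    next
      case 2 then show ?thesis using p \<open>s \<noteq> t\<close> by (cases ?p) auto
    next
      case 3
      then obtain a b where "?p = [a, b]" by (auto simp: length_Suc_conv numeral_2_eq_2)
      then show ?thesis using p assms(4) by (auto simp: is_path_def)
    qed
  qed
  moreover have "is_path E ?p"
    using p(1) assms(2) by (auto simp: is_path_def spanning_tree_def)
  moreover have "(last ?p, hd ?p) \<in> E"
    using p assms(1,3) symD[of E s t] by (simp add: simple_graph_def)
  ultimately show ?thesis by (simp add: is_cycle_iff_closed_path)
qed

lemma is_cycle_if_directed_fundamental_cycle:
  assumes "simple_graph V E" "spanning_tree V E T" "C \<in> directed_fundamental_cycles E T r"
  shows "is_cycle E C"
  using assms(3) is_cycle_tree_path_non_tree_edge[OF assms(1,2)]
  unfolding directed_fundamental_cycles_def by auto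

fun path_gain :: "('a \<Rightarrow> 'a \<Rightarrow> 'b::comm_monoid_mult) \<Rightarrow> 'a list \<Rightarrow> 'b" where
  "path_gain \<phi> (x # y # xs) = \<phi> x y * path_gain \<phi> (y # xs)"
| "path_gain \<phi> _ = 1"

lemma path_gain_append:
  "path_gain \<phi> (a @ s # b) = path_gain \<phi> (a @ [s]) * path_gain \<phi> (s # b)"
  by (induction a rule: induct_list012) (simp_all add: mult.assoc)

lemma path_gain_eq_prod: "path_gain \<phi> xs = (\<Prod>i<length xs - 1. \<phi> (xs ! i) (xs ! Suc i))"
  by (induction \<phi> xs rule: path_gain.induct)
    (simp_all add: prod.lessThan_Suc_shift del: prod.lessThan_Suc)

lemma cycle_gain_eq_path_gain:
  assumes "c \<noteq> []"
  shows "cycle_gain \<phi> c = path_gain \<phi> c * \<phi> (last c) (hd c)"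
proof -
  obtain m where m: "length c = Suc m" using assms by (cases c) auto
  have "cycle_gain \<phi> c = (\<Prod>i<m. \<phi> (c ! i) (c ! (Suc i mod Suc m))) * \<phi> (c ! m) (c ! 0)"
    by (simp add: cycle_gain_def m)
  also have "(\<Prod>i<m. \<phi> (c ! i) (c ! (Suc i mod Suc m))) = (\<Prod>i<m. \<phi> (c ! i) (c ! Suc i))"
    by (rule prod.cong) auto
  also have "\<dots> * \<phi> (c ! m) (c ! 0) = path_gain \<phi> c * \<phi> (last c) (hd c)"
    using assms m by (simp add: path_gain_eq_prod last_conv_nth hd_conv_nth)
  finally show ?thesis .
qed

lemma path_gain_nonzero:
  fixes \<phi> :: "'a \<Rightarrow> 'a \<Rightarrow> 'b::{comm_semiring_1, semiring_no_zero_divisors}"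
  shows "successively (\<lambda>u v. \<phi> u v \<noteq> 0) p \<Longrightarrow> path_gain \<phi> p \<noteq> 0"
  by (induction \<phi> p rule: path_gain.induct) auto

lemma path_gain_telescope:
  fixes \<phi> :: "'a \<Rightarrow> 'a \<Rightarrow> 'b::field"
  assumes "successively (\<lambda>u v. \<phi> u v = f v / f u) p" "p \<noteq> []" "\<forall>v\<in>set p. f v \<noteq> 0"
  shows "path_gain \<phi> p = f (last p) / f (hd p)"
  using assms by (induction \<phi> p rule: path_gain.induct) auto

lemma cycle_gain_eq_1_if_potential_quotient:
  assumes "E \<subseteq> V \<times> V" "is_cycle E C"
    and quotient: "\<forall>(u, v)\<in>E. \<psi> u v = f v / f u" and nonzero: "\<forall>v\<in>V. f v \<noteq> 0"
  shows "cycle_gain \<psi> C = 1"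
proof -
  have C: "C \<noteq> []" "successively (\<lambda>u v. (u, v) \<in> E) C" "(last C, hd C) \<in> E"
    using assms(2) by (auto simp: is_cycle_iff_closed_path is_path_iff_successively)
  have "set C \<subseteq> V"
  proof
    fix v assume "v \<in> set C"
    then obtain i where "i < length C" "C ! i = v" by (auto simp: in_set_conv_nth)
    then show "v \<in> V" using assms(1,2) unfolding is_cycle_def by blast
  qed
  then have "path_gain \<psi> C = f (last C) / f (hd C)"
    using C quotient nonzero by (intro path_gain_telescope) (auto elim!: successively_mono)
  moreover have "f (last C) \<noteq> 0" "f (hd C) \<noteq> 0"
    using \<open>set C \<subseteq> V\<close> last_in_set[OF C(1)] hd_in_set[OF C(1)] nonzero by auto
  ultimately show ?thesis
    using C(1,3) quotient by (auto simp: cycle_gain_eq_path_gain)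
qed

lemma T_gainD:
  assumes "T_gain E \<phi>" "(u, v) \<in> E"
  shows "cmod (\<phi> u v) = 1" "\<phi> v u = inverse (\<phi> u v)"
  using bspec[OF assms(1)[unfolded T_gain_def] assms(2)] by simp_all

lemma T_gain_nonzero: "T_gain E \<phi> \<Longrightarrow> (u, v) \<in> E \<Longrightarrow> \<phi> u v \<noteq> 0"
  using T_gainD(1) by fastforce

lemma T_gain_divide:
  assumes "T_gain E \<phi>1" "T_gain E \<phi>2"
  shows "T_gain E (\<lambda>u v. \<phi>1 u v / \<phi>2 u v)"
  unfolding T_gain_def
proof clarify
  fix u v assume "(u, v) \<in> E"
  then show "cmod (\<phi>1 u v / \<phi>2 u v) = 1 \<and> \<phi>1 v u / \<phi>2 v u = inverse (\<phi>1 u v / \<phi>2 u v)"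
    using T_gainD[OF assms(1)] T_gainD[OF assms(2)]
    by (simp add: norm_mult norm_inverse divide_inverse mult.commute)
qed

lemma cycle_gain_eq_iff_ratio_gain_eq_1:
  assumes "T_gain E \<phi>2" "is_cycle E C"
  shows "cycle_gain \<phi>1 C = cycle_gain \<phi>2 C \<longleftrightarrow> cycle_gain (\<lambda>u v. \<phi>1 u v / \<phi>2 u v) C = 1"
proof -
  have "\<forall>i<length C. (C ! i, C ! (Suc i mod length C)) \<in> E"
    using assms(2) by (simp add: is_cycle_def)
  then have "cycle_gain \<phi>2 C \<noteq> 0"
    unfolding cycle_gain_def using T_gain_nonzero[OF assms(1)] by simp
  then show ?thesis unfolding cycle_gain_def by (simp add: prod_dividef)
qed

definition tree_potential ::
  "('a \<Rightarrow> 'a \<Rightarrow> 'b::comm_monoid_mult) \<Rightarrow> ('a \<times> 'a) set \<Rightarrow> 'a \<Rightarrow> 'a \<Rightarrow> 'b" where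
  "tree_potential \<psi> T r v = path_gain \<psi> (tree_path T r v)"

lemma tree_potential_nonzero:
  assumes "spanning_tree V E T" "T_gain E \<psi>" "r \<in> V" "v \<in> V"
  shows "tree_potential \<psi> T r v \<noteq> 0"
proof -
  have "is_path T (tree_path T r v)"
    using tree_path_from_to[OF assms(1,3,4)] by (simp add: path_from_to_def)
  moreover have "T \<subseteq> E" using assms(1) by (simp add: spanning_tree_def)
  ultimately show ?thesis
    unfolding tree_potential_def using T_gain_nonzero[OF assms(2)]
    by (intro path_gain_nonzero) (auto simp: is_path_iff_successively elim!: successively_mono)
qed

lemma path_gain_tree_path_edge:
  assumes "simple_graph V E" "spanning_tree V E T" "T_gain E \<psi>" "(s, t) \<in> E"
    and fundamental: "(s, t) \<notin> T \<Longrightarrow> cycle_gain \<psi> (tree_path T s t) = 1"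
  shows "path_gain \<psi> (tree_path T s t) = \<psi> s t"
proof -
  have "s \<in> V" "t \<in> V" "s \<noteq> t"
    using assms(1,4) by (auto simp: simple_graph_def irrefl_def)
  show ?thesis
  proof (cases "(s, t) \<in> T")
    case True
    then show ?thesis using tree_path_tree_edge[OF assms(2)] \<open>s \<noteq> t\<close> by simp
  next
    case False
    let ?q = "tree_path T s t"
    have q: "?q \<noteq> []" "hd ?q = s" "last ?q = t"
      using tree_path_from_to[OF assms(2) \<open>s \<in> V\<close> \<open>t \<in> V\<close>]
      by (auto simp: path_from_to_def is_path_def)
    have "path_gain \<psi> ?q * \<psi> t s = 1"
      using fundamental[OF False] cycle_gain_eq_path_gain[OF q(1)] q by simp
    moreover have "\<psi> t s = inverse (\<psi> s t)" "\<psi> s t \<noteq> 0"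
      using T_gainD(2)[OF assms(3,4)] T_gain_nonzero[OF assms(3,4)] by simp_all
    ultimately show ?thesis by (simp add: field_simps)
  qed
qed

lemma tree_potential_step:
  assumes "simple_graph V E" "spanning_tree V E T" "T_gain E \<psi>" "r \<in> V"
    and "(s, t) \<in> E" "tree_le T r s t"
    and fundamental: "(s, t) \<notin> T \<Longrightarrow> cycle_gain \<psi> (tree_path T s t) = 1"
  shows "tree_potential \<psi> T r t = tree_potential \<psi> T r s * \<psi> s t"
proof -
  have "t \<in> V" using assms(1,5) by (auto simp: simple_graph_def)
  then obtain a b where "tree_path T r t = a @ s # b"
    and rs: "tree_path T r s = a @ [s]" and st: "tree_path T s t = s # b"
    using tree_path_through[OF assms(2,4)] assms(6) by (metis tree_le_def)
  then have "tree_potential \<psi> T r t = tree_potential \<psi> T r s * path_gain \<psi> (tree_path T s t)"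
    unfolding tree_potential_def by (simp only: rs st path_gain_append[of \<psi> a s b])
  then show ?thesis
    using path_gain_tree_path_edge[OF assms(1,2,3,5) fundamental] by simp
qed

lemma T_gain_eq_potential_quotient:
  assumes simple: "simple_graph V E" and normal: "normal_spanning_tree V E T r"
    and gain: "T_gain E \<psi>"
    and balanced: "\<forall>C\<in>directed_fundamental_cycles E T r. cycle_gain \<psi> C = 1"
    and uv: "(u, v) \<in> E"
  shows "\<psi> u v = tree_potential \<psi> T r v / tree_potential \<psi> T r u"
proof -
  have tree: "spanning_tree V E T" and "r \<in> V"
    and comparable: "tree_le T r u v \<or> tree_le T r v u"
    using normal uv by (auto simp: normal_spanning_tree_def)
  have step: "tree_potential \<psi> T r t = tree_potential \<psi> T r s * \<psi> s t"
    if "(s, t) \<in> E" "tree_le T r s t" for s t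
    using balanced that by (intro tree_potential_step[OF simple tree gain \<open>r \<in> V\<close>])
      (auto simp: directed_fundamental_cycles_def)
  have "u \<in> V" "v \<in> V" using simple uv by (auto simp: simple_graph_def)
  then have "tree_potential \<psi> T r u \<noteq> 0" "tree_potential \<psi> T r v \<noteq> 0"
    using tree_potential_nonzero[OF tree gain \<open>r \<in> V\<close>] by auto
  moreover have "(v, u) \<in> E"
    using simple uv symD[of E u v] by (simp add: simple_graph_def)
  moreover have "\<psi> v u = inverse (\<psi> u v)" "\<psi> u v \<noteq> 0"
    using T_gainD(2)[OF gain uv] T_gain_nonzero[OF gain uv] by simp_all
  ultimately show ?thesis
    using comparable step[OF uv] step[of v u] by (auto simp: field_simps)
qed

lemma cycle_gain_eq_1_if_fundamental_cycle_gains_eq_1: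
  assumes "simple_graph V E" "normal_spanning_tree V E T r" "T_gain E \<psi>"
    and "\<forall>C\<in>directed_fundamental_cycles E T r. cycle_gain \<psi> C = 1"
    and "is_cycle E C"
  shows "cycle_gain \<psi> C = 1"
proof (rule cycle_gain_eq_1_if_potential_quotient)
  show "E \<subseteq> V \<times> V" using assms(1) by (simp add: simple_graph_def)
  show "\<forall>(u, v)\<in>E. \<psi> u v = tree_potential \<psi> T r v / tree_potential \<psi> T r u"
    using T_gain_eq_potential_quotient[OF assms(1-4)] by blast
  have "spanning_tree V E T" "r \<in> V" using assms(2) by (simp_all add: normal_spanning_tree_def)
  then show "\<forall>v\<in>V. tree_potential \<psi> T r v \<noteq> 0"
    using tree_potential_nonzero[of V E T \<psi> r] assms(3) by simp
qed (fact assms(5))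

theorem theorem3p1:
  fixes V :: "'a set" and E T :: "('a \<times> 'a) set" and r :: 'a
    and \<phi>1 \<phi>2 :: "'a \<Rightarrow> 'a \<Rightarrow> complex"
  assumes "simple_graph V E" and "connected_graph V E"
    and "T_gain E \<phi>1" and "T_gain E \<phi>2"
    and "normal_spanning_tree V E T r"
  shows "(\<forall>C \<in> directed_fundamental_cycles E T r. cycle_gain \<phi>1 C = cycle_gain \<phi>2 C)
     \<longleftrightarrow> (\<forall>C. is_cycle E C \<longrightarrow> cycle_gain \<phi>1 C = cycle_gain \<phi>2 C)"
proof -
  let ?\<psi> = "\<lambda>u v. \<phi>1 u v / \<phi>2 u v"
  have "spanning_tree V E T" using assms(5) by (simp add: normal_spanning_tree_def)
  then have fundamental_is_cycle: "is_cycle E C"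
    if "C \<in> directed_fundamental_cycles E T r" for C
    using is_cycle_if_directed_fundamental_cycle[OF assms(1)] that by blast
  have same_gain_iff: "cycle_gain \<phi>1 C = cycle_gain \<phi>2 C \<longleftrightarrow> cycle_gain ?\<psi> C = 1"
    if "is_cycle E C" for C
    using cycle_gain_eq_iff_ratio_gain_eq_1[OF assms(4) that] .
  show ?thesis
  proof
    assume "\<forall>C \<in> directed_fundamental_cycles E T r. cycle_gain \<phi>1 C = cycle_gain \<phi>2 C"
    then have "\<forall>C \<in> directed_fundamental_cycles E T r. cycle_gain ?\<psi> C = 1"
      using fundamental_is_cycle same_gain_iff by simp
    then show "\<forall>C. is_cycle E C \<longrightarrow> cycle_gain \<phi>1 C = cycle_gain \<phi>2 C"
      using cycle_gain_eq_1_if_fundamental_cycle_gains_eq_1[OF assms(1,5) T_gain_divide[OF assms(3,4)]]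
        same_gain_iff by simp
  next
    assume "\<forall>C. is_cycle E C \<longrightarrow> cycle_gain \<phi>1 C = cycle_gain \<phi>2 C"
    then show "\<forall>C \<in> directed_fundamental_cycles E T r. cycle_gain \<phi>1 C = cycle_gain \<phi>2 C"
      using fundamental_is_cycle by simp
  qed
qed

end
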